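(* Let $X$ be a list of program variables of type $T$ and $U$ a list of unentangled ghosts of type $T$, and $\mathbf{u}$ an unentangled ghost of type $T$. Then $X\equiv_q U$ and $\mathrm{separable}(X):=(X\equiv_q\mathbf{u})$ are $\ell^2[X]$-disentangling, and $X\equiv_{cl}U$ and $\mathrm{class}(X):=(X\equiv_{cl}\mathbf{u})$ are $\{|i\rangle\}_{i\in T}$-disentangling.
   Context: $\ell^2[V]$ is the Hilbert space with orthonormal basis indexed by assignments on the variable set $V$ (quantum memories over $V$); $\ell^2[V\cup W]\cong\ell^2[V]\otimes\ell^2[W]$. A predicate is a closed subspace; predicates over different variable sets are identified if they agree after tensoring with the full spaces of missing variables. Quantum equality: for disjoint lists $W,W'\subseteq V$ of the same type, $W\equiv_q W'$ is the set of $\psi\in\ell^2[V]$ invariant under the unitary swapping the contents of $W$ and $W'$. Classical equality: $W\equiv_{cl}W'$ is the closed span of all $|i\rangle_W\otimes|i\rangle_{W'}\otimes\psi$ with $\psi$ a quantum memory over $V\setminus(W\cup W')$. Disentangling: a predicate $A$ on $X\cup U$ ($X$ program variables, $U$ unentangled ghosts) is $M$-disentangling, for a set $M\subseteq\ell^2[X]$, iff for every set of variables $V$ disjoint from $X\cup U$, all quantum memories $\psi_{VX}\ne0$ over $V\cup X$ and $\psi_U\ne0$ over $U$ with $\psi_{VX}\otimes\psi_U\in A$, we have $\psi_{VX}=\psi_V\otimes\psi_X$ for some $\psi_V\in\ell^2[V]$ and some $\psi_X\in M$. *)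

theory Defs
  imports "HOL-Analysis.Analysis"
begin

text \<open>Quantum memories over a set of variables whose joint assignments form the type 'a
  are modelled as functions 'a \<Rightarrow> complex; l2[V] is the set of square-summable ones.
  l2[V \<union> W] = l2[V] \<otimes> l2[W] is modelled via the product type of assignments.\<close>

definition is_ell2 :: "('a \<Rightarrow> complex) \<Rightarrow> bool" where
  "is_ell2 \<psi> \<longleftrightarrow> (\<lambda>a. (cmod (\<psi> a))\<^sup>2) summable_on UNIV"

definition ell2_norm :: "('a \<Rightarrow> complex) \<Rightarrow> real" where
  "ell2_norm \<psi> = sqrt (\<Sum>\<^sub>\<infinity>a. (cmod (\<psi> a))\<^sup>2)"

definition tensor :: "('a \<Rightarrow> complex) \<Rightarrow> ('b \<Rightarrow> complex) \<Rightarrow> ('a \<times> 'b \<Rightarrow> complex)" where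
  "tensor f g = (\<lambda>(a, b). f a * g b)"

definition ket :: "'a \<Rightarrow> 'a \<Rightarrow> complex" where
  "ket i = (\<lambda>a. if a = i then 1 else 0)"

definition cspan :: "('a \<Rightarrow> complex) set \<Rightarrow> ('a \<Rightarrow> complex) set" where
  "cspan S = {f. \<exists>F c. finite F \<and> F \<subseteq> S \<and> f = (\<lambda>a. \<Sum>g\<in>F. c g * g a)}"

definition ell2_closure :: "('a \<Rightarrow> complex) set \<Rightarrow> ('a \<Rightarrow> complex) set" where
  "ell2_closure S = {f. is_ell2 f \<and> (\<forall>e>0. \<exists>g\<in>S. ell2_norm (\<lambda>a. f a - g a) < e)}"

definition ccspan :: "('a \<Rightarrow> complex) set \<Rightarrow> ('a \<Rightarrow> complex) set" where
  "ccspan S = ell2_closure (cspan S)"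

text \<open>Memory layout for predicates on V \<union> X \<union> W: assignments ((v, x), w), where
  X and W have the same type 'x and V (type 'v) is the set of all other variables.\<close>

definition swap_XW :: "(('v \<times> 'x) \<times> 'x \<Rightarrow> complex) \<Rightarrow> (('v \<times> 'x) \<times> 'x \<Rightarrow> complex)" where
  "swap_XW \<psi> = (\<lambda>((v, x), w). \<psi> ((v, w), x))"

definition quantum_eq :: "(('v \<times> 'x) \<times> 'x \<Rightarrow> complex) set" where
  "quantum_eq = {\<psi>. is_ell2 \<psi> \<and> swap_XW \<psi> = \<psi>}"

definition classical_eq :: "(('v \<times> 'x) \<times> 'x \<Rightarrow> complex) set" where
  "classical_eq = ccspan {tensor (tensor \<psi> (ket i)) (ket i) | \<psi> i. is_ell2 \<psi>}"

text \<open>separable(X) := X \<equiv>q u and class(X) := X \<equiv>cl u for a single ghost u of type T.\<close>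
definition separable :: "(('v \<times> 'x) \<times> 'x \<Rightarrow> complex) set" where
  "separable = quantum_eq"

definition classX :: "(('v \<times> 'x) \<times> 'x \<Rightarrow> complex) set" where
  "classX = classical_eq"

text \<open>The predicate A is given in its version on V \<union> X \<union> U
  (predicates are identified up to tensoring with full spaces); the type 'v of
  assignments of V is universally quantified at the level of theorems.\<close>
definition disentangling ::
  "(('v \<times> 'x) \<times> 'u \<Rightarrow> complex) set \<Rightarrow> ('x \<Rightarrow> complex) set \<Rightarrow> bool" where
  "disentangling A M \<longleftrightarrow>
     (\<forall>\<psi>VX \<psi>U. is_ell2 \<psi>VX \<and> \<psi>VX \<noteq> (\<lambda>_. 0) \<and> is_ell2 \<psi>U \<and> \<psi>U \<noteq> (\<lambda>_. 0)
        \<and> tensor \<psi>VX \<psi>U \<in> A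
        \<longrightarrow> (\<exists>\<psi>V \<psi>X. is_ell2 \<psi>V \<and> \<psi>X \<in> M \<and> \<psi>VX = tensor \<psi>V \<psi>X))"

end

theory Submission
  imports Defs
begin

text \<open>Swap invariance of \<open>\<psi>VX \<otimes> \<psi>U\<close> says \<open>\<psi>VX (v, x) \<psi>U w = \<psi>VX (v, w) \<psi>U x\<close>;
  fixing \<open>w\<close> with \<open>\<psi>U w \<noteq> 0\<close> exhibits \<open>\<psi>VX\<close> as a multiple of \<open>\<psi>VX (-, w) \<otimes> \<psi>U\<close>.
  For classical equality, every spanning vector \<open>\<psi> \<otimes> |i\<rangle> \<otimes> |i\<rangle>\<close> vanishes off the
  diagonal \<open>x = w\<close>; this survives linear combinations and l2 limits, because point
  evaluation is bounded by the l2 norm. Hence \<open>\<psi>VX \<otimes> \<psi>U\<close> vanishes off the diagonal,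
  so \<open>\<psi>VX\<close> is supported on \<open>x = w\<close> for a single \<open>w\<close> with \<open>\<psi>U w \<noteq> 0\<close>, i.e.
  \<open>\<psi>VX = \<psi>VX (-, w) \<otimes> |w\<rangle>\<close>.\<close>

lemma is_ell2_zero: "is_ell2 (\<lambda>_. 0)"
  unfolding is_ell2_def by simp

lemma is_ell2_cmult: "is_ell2 f \<Longrightarrow> is_ell2 (\<lambda>a. c * f a)"
  unfolding is_ell2_def
  by (drule summable_on_cmult_right[where c = "(cmod c)\<^sup>2"])
     (simp add: norm_mult power_mult_distrib)

lemma cmod_add_square_le: "(cmod (a + b))\<^sup>2 \<le> 2 * (cmod a)\<^sup>2 + 2 * (cmod b)\<^sup>2"
proof -
  have "(cmod (a + b))\<^sup>2 \<le> (cmod a + cmod b)\<^sup>2"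
    by (simp add: norm_triangle_ineq power_mono)
  also have "\<dots> \<le> 2 * (cmod a)\<^sup>2 + 2 * (cmod b)\<^sup>2"
    using zero_le_power2[of "cmod a - cmod b"] by (simp add: power2_diff power2_sum)
  finally show ?thesis .
qed

lemma is_ell2_add:
  assumes "is_ell2 f" "is_ell2 g"
  shows "is_ell2 (\<lambda>a. f a + g a)"
proof -
  have "(\<lambda>a. 2 * (cmod (f a))\<^sup>2 + 2 * (cmod (g a))\<^sup>2) summable_on UNIV"
    using assms unfolding is_ell2_def by (intro summable_on_add summable_on_cmult_right)
  then show ?thesis
    unfolding is_ell2_def by (rule summable_on_comparison_test) (auto simp: cmod_add_square_le)
qed

lemma is_ell2_diff: "is_ell2 f \<Longrightarrow> is_ell2 g \<Longrightarrow> is_ell2 (\<lambda>a. f a - g a)"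
  using is_ell2_add[of f "\<lambda>a. - 1 * g a"] is_ell2_cmult[of g "- 1"] by simp

lemma is_ell2_cspan:
  assumes "\<And>g. g \<in> S \<Longrightarrow> is_ell2 g" "h \<in> cspan S"
  shows "is_ell2 h"
proof -
  obtain F c where "finite F" "F \<subseteq> S" and h: "h = (\<lambda>a. \<Sum>g\<in>F. c g * g a)"
    using assms(2) unfolding cspan_def by blast
  then show ?thesis
  proof (induction F arbitrary: h rule: finite_induct)
    case empty
    then show ?case by (simp add: is_ell2_zero)
  next
    case (insert g F)
    then show ?case
      using assms(1) by (simp add: is_ell2_add is_ell2_cmult)
  qed
qed

lemma cspan_vanishing:
  assumes "\<And>g. g \<in> S \<Longrightarrow> g a = 0" "h \<in> cspan S"
  shows "h a = 0"
proof -
  obtain F c where "F \<subseteq> S" "h = (\<lambda>b. \<Sum>g\<in>F. c g * g b)"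
    using assms(2) unfolding cspan_def by blast
  then show ?thesis
    using assms(1) by (auto intro!: sum.neutral)
qed

lemma cmod_le_ell2_norm:
  assumes "is_ell2 h"
  shows "cmod (h a) \<le> ell2_norm h"
proof -
  have "(\<Sum>\<^sub>\<infinity>b\<in>{a}. (cmod (h b))\<^sup>2) \<le> (\<Sum>\<^sub>\<infinity>b. (cmod (h b))\<^sup>2)"
    using assms unfolding is_ell2_def by (intro infsum_mono_neutral) auto
  then show ?thesis
    unfolding ell2_norm_def by (simp add: real_le_rsqrt)
qed

lemma ell2_closure_vanishing:
  assumes S: "\<And>g. g \<in> S \<Longrightarrow> is_ell2 g \<and> g a = 0" and f: "f \<in> ell2_closure S"
  shows "f a = 0"
proof (rule ccontr)
  assume "f a \<noteq> 0"
  then have "cmod (f a) > 0"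
    by simp
  then obtain g where "g \<in> S" and close: "ell2_norm (\<lambda>b. f b - g b) < cmod (f a)"
    using f unfolding ell2_closure_def by blast
  have "is_ell2 (\<lambda>b. f b - g b)"
    using f S \<open>g \<in> S\<close> unfolding ell2_closure_def by (blast intro: is_ell2_diff)
  from cmod_le_ell2_norm[OF this, of a] close S[OF \<open>g \<in> S\<close>] show False
    by simp
qed

lemma ccspan_vanishing:
  assumes "\<And>g. g \<in> S \<Longrightarrow> is_ell2 g \<and> g a = 0" "f \<in> ccspan S"
  shows "f a = 0"
proof -
  have "is_ell2 g \<and> g a = 0" if "g \<in> cspan S" for g
    using assms(1) is_ell2_cspan[OF _ that] cspan_vanishing[OF _ that] by blast
  then show ?thesis
    using assms(2) unfolding ccspan_def by (rule ell2_closure_vanishing)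
qed

lemma is_ell2_tensor_ket:
  fixes \<psi> :: "'a \<Rightarrow> complex" and i :: 'b
  assumes "is_ell2 \<psi>"
  shows "is_ell2 (tensor \<psi> (ket i))"
proof -
  let ?n = "\<lambda>p. (cmod (tensor \<psi> (ket i) p))\<^sup>2"
  have "(?n \<circ> (\<lambda>a. (a, i))) summable_on UNIV"
    using assms unfolding is_ell2_def by (simp add: o_def tensor_def ket_def)
  then have "?n summable_on range (\<lambda>a. (a, i))"
    by (subst summable_on_reindex) (auto simp: inj_on_def)
  then show ?thesis
    unfolding is_ell2_def
    by (rule summable_on_cong_neutral[THEN iffD1, rotated -1])
       (auto simp: tensor_def ket_def image_iff)
qed

lemma is_ell2_slice:
  fixes F :: "'a \<times> 'b \<Rightarrow> complex"
  assumes "is_ell2 F"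
  shows "is_ell2 (\<lambda>a. F (a, b))"
proof -
  have "(\<lambda>p. (cmod (F p))\<^sup>2) summable_on range (\<lambda>a. (a, b))"
    using assms unfolding is_ell2_def by (rule summable_on_subset_banach) auto
  then show ?thesis
    unfolding is_ell2_def by (subst (asm) summable_on_reindex) (auto simp: inj_on_def o_def)
qed

lemma classical_eq_vanishing_off_diagonal:
  assumes "f \<in> (classical_eq :: (('v \<times> 'x) \<times> 'x \<Rightarrow> complex) set)" "x \<noteq> w"
  shows "f ((v, x), w) = 0"
  using assms(1) unfolding classical_eq_def
proof (rule ccspan_vanishing[rotated])
  fix g :: "('v \<times> 'x) \<times> 'x \<Rightarrow> complex"
  assume "g \<in> {tensor (tensor \<psi> (ket i)) (ket i) |\<psi> i. is_ell2 \<psi>}"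
  then obtain \<psi> i where "g = tensor (tensor \<psi> (ket i)) (ket i)" "is_ell2 \<psi>"
    by blast
  then show "is_ell2 g \<and> g ((v, x), w) = 0"
    using assms(2) by (simp add: is_ell2_tensor_ket) (auto simp: tensor_def ket_def)
qed

lemma disentangling_quantum_eq:
  "disentangling (quantum_eq :: (('v \<times> 'x) \<times> 'x \<Rightarrow> complex) set) {\<psi>. is_ell2 \<psi>}"
  unfolding disentangling_def
proof (intro allI impI)
  fix \<psi>VX :: "'v \<times> 'x \<Rightarrow> complex" and \<psi>U :: "'x \<Rightarrow> complex"
  assume a: "is_ell2 \<psi>VX \<and> \<psi>VX \<noteq> (\<lambda>_. 0) \<and> is_ell2 \<psi>U \<and> \<psi>U \<noteq> (\<lambda>_. 0)
    \<and> tensor \<psi>VX \<psi>U \<in> quantum_eq"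
  then obtain w where w: "\<psi>U w \<noteq> 0" by auto
  have swap: "swap_XW (tensor \<psi>VX \<psi>U) = tensor \<psi>VX \<psi>U"
    using a unfolding quantum_eq_def by auto
  have exchange: "\<psi>VX (v, w) * \<psi>U x = \<psi>VX (v, x) * \<psi>U w" for v x
    using fun_cong[OF swap, of "((v, x), w)"] by (simp add: swap_XW_def tensor_def)
  define \<psi>V where "\<psi>V = (\<lambda>v. inverse (\<psi>U w) * \<psi>VX (v, w))"
  have "is_ell2 \<psi>V"
    unfolding \<psi>V_def using a by (intro is_ell2_cmult is_ell2_slice) auto
  moreover have "\<psi>VX = tensor \<psi>V \<psi>U"
    using exchange w by (auto simp: tensor_def \<psi>V_def field_simps)
  ultimately show "\<exists>\<psi>V \<psi>X. is_ell2 \<psi>V \<and> \<psi>X \<in> {\<psi>. is_ell2 \<psi>} \<and> \<psi>VX = tensor \<psi>V \<psi>X"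
    using a by blast
qed

lemma disentangling_classical_eq:
  "disentangling (classical_eq :: (('v \<times> 'x) \<times> 'x \<Rightarrow> complex) set) (range ket)"
  unfolding disentangling_def
proof (intro allI impI)
  fix \<psi>VX :: "'v \<times> 'x \<Rightarrow> complex" and \<psi>U :: "'x \<Rightarrow> complex"
  assume a: "is_ell2 \<psi>VX \<and> \<psi>VX \<noteq> (\<lambda>_. 0) \<and> is_ell2 \<psi>U \<and> \<psi>U \<noteq> (\<lambda>_. 0)
    \<and> tensor \<psi>VX \<psi>U \<in> classical_eq"
  then obtain w where w: "\<psi>U w \<noteq> 0" by auto
  have support: "\<psi>VX (v, x) = 0" if "x \<noteq> w" for v x
    using classical_eq_vanishing_off_diagonal[of "tensor \<psi>VX \<psi>U" x w v] a that w
    by (simp add: tensor_def)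
  define \<psi>V where "\<psi>V = (\<lambda>v. \<psi>VX (v, w))"
  have "is_ell2 \<psi>V"
    unfolding \<psi>V_def using a by (intro is_ell2_slice) auto
  moreover have "\<psi>VX = tensor \<psi>V (ket w)"
    by (auto simp: tensor_def \<psi>V_def ket_def support)
  ultimately show "\<exists>\<psi>V \<psi>X. is_ell2 \<psi>V \<and> \<psi>X \<in> range ket \<and> \<psi>VX = tensor \<psi>V \<psi>X"
    by blast
qed

theorem lemma11:
  shows "disentangling (quantum_eq :: (('v \<times> 'x) \<times> 'x \<Rightarrow> complex) set) {\<psi>. is_ell2 \<psi>}
       \<and> disentangling (separable :: (('v \<times> 'x) \<times> 'x \<Rightarrow> complex) set) {\<psi>. is_ell2 \<psi>}
       \<and> disentangling (classical_eq :: (('v \<times> 'x) \<times> 'x \<Rightarrow> complex) set) (range ket)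
       \<and> disentangling (classX :: (('v \<times> 'x) \<times> 'x \<Rightarrow> complex) set) (range ket)"
  using disentangling_quantum_eq disentangling_classical_eq
  unfolding separable_def classX_def by blast

end
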